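(* Let $G$ be a $2$-connected cubic multigraph, let $H\neq G$ be a peninsula of $G$, and let $e=ab$ be the external port of $H$. Then there exists an $a$-$b$-path in $G$ all of whose internal vertices lie in $V(H)$ and whose length is at least $2\log|H|-2\log\log|H|-8$ (with $\log=\log_2$).
   Context: Multigraphs are finite and loopless, parallel edges allowed; $|H|$ is the number of vertices. A cut of $G$ is a bipartition $(U,V(G)\setminus U)$; its cut-set is the set of edges between the sides. A tombolo-cut is a cut whose cut-set (the tombolo) has exactly $2$ edges. For a tombolo-cut with tombolo $\{a_1b_1,a_2b_2\}$, $a_1,a_2\in U$, the pairs $\{a_1,a_2\}$ and $\{b_1,b_2\}$ are its port-pairs. A virtual subgraph of $G$ is a multigraph $H$ with $V(H)\subseteq V(G)$ whose edges are all edges of $G$ with both ends in $V(H)$ (real edges) plus one (possibly parallel) virtual edge $ab$ for every port-pair $\{a,b\}\subseteq V(H)$ of a tombolo both of whose edges are not in $E(H)$. A peninsula is a virtual subgraph $H$ such that $(V(H),V(G)\setminus V(H))$ is a tombolo-cut, or $H=G$. If $H\ne G$ is a peninsula with tombolo $\{a_1b_1,a_2b_2\}$, $a_1,a_2\in V(H)$, then its external port is the edge $b_1b_2$ (the virtual edge it creates in virtual subgraphs on the other side). *)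

theory Defs
  imports Complex_Main
begin

text \<open>A finite loopless multigraph is given by a vertex set V, an edge set E
 (edges are abstract objects, so parallel edges are allowed) and a map ends
 assigning to each edge its set of exactly two distinct end vertices.\<close>

definition multigraph :: "'v set \<Rightarrow> 'e set \<Rightarrow> ('e \<Rightarrow> 'v set) \<Rightarrow> bool" where
  "multigraph V E ends \<longleftrightarrow> finite V \<and> finite E \<and>
     (\<forall>e\<in>E. ends e \<subseteq> V \<and> card (ends e) = 2)"

definition degree :: "'e set \<Rightarrow> ('e \<Rightarrow> 'v set) \<Rightarrow> 'v \<Rightarrow> nat" where
  "degree E ends v = card {e\<in>E. v \<in> ends e}"

definition cubic :: "'v set \<Rightarrow> 'e set \<Rightarrow> ('e \<Rightarrow> 'v set) \<Rightarrow> bool" where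
  "cubic V E ends \<longleftrightarrow> (\<forall>v\<in>V. degree E ends v = 3)"

definition adjacent :: "'e set \<Rightarrow> ('e \<Rightarrow> 'v set) \<Rightarrow> 'v \<Rightarrow> 'v \<Rightarrow> bool" where
  "adjacent E ends x y \<longleftrightarrow> (\<exists>e\<in>E. ends e = {x, y})"

definition walk :: "'e set \<Rightarrow> ('e \<Rightarrow> 'v set) \<Rightarrow> 'v list \<Rightarrow> bool" where
  "walk E ends p \<longleftrightarrow> p \<noteq> [] \<and> (\<forall>i. Suc i < length p \<longrightarrow> adjacent E ends (p ! i) (p ! Suc i))"

definition path :: "'e set \<Rightarrow> ('e \<Rightarrow> 'v set) \<Rightarrow> 'v list \<Rightarrow> bool" where
  "path E ends p \<longleftrightarrow> walk E ends p \<and> distinct p"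

definition path_length :: "'v list \<Rightarrow> nat" where
  "path_length p = length p - 1"

definition connected_on :: "'e set \<Rightarrow> ('e \<Rightarrow> 'v set) \<Rightarrow> 'v set \<Rightarrow> bool" where
  "connected_on E ends S \<longleftrightarrow> (\<forall>x\<in>S. \<forall>y\<in>S. \<exists>p. walk E ends p \<and> set p \<subseteq> S \<and> hd p = x \<and> last p = y)"

definition two_connected :: "'v set \<Rightarrow> 'e set \<Rightarrow> ('e \<Rightarrow> 'v set) \<Rightarrow> bool" where
  "two_connected V E ends \<longleftrightarrow> card V \<ge> 3 \<and> connected_on E ends V \<and>
     (\<forall>v\<in>V. connected_on E ends (V - {v}))"

definition cut_set :: "'e set \<Rightarrow> ('e \<Rightarrow> 'v set) \<Rightarrow> 'v set \<Rightarrow> 'e set" where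
  "cut_set E ends U = {e\<in>E. ends e \<inter> U \<noteq> {} \<and> ends e - U \<noteq> {}}"

definition tombolo_cut :: "'v set \<Rightarrow> 'e set \<Rightarrow> ('e \<Rightarrow> 'v set) \<Rightarrow> 'v set \<Rightarrow> bool" where
  "tombolo_cut V E ends U \<longleftrightarrow> U \<subseteq> V \<and> card (cut_set E ends U) = 2"

end

theory Submission
  imports Defs
begin

text \<open>Contract the far side \<open>V - U\<close> of the tombolo to the single vertex \<open>b1\<close>, joined to
  both ports \<open>a1\<close> and \<open>a2\<close>. The contracted graph is 2-connected, so by Whitney's theorem \<open>b1\<close>
  and any \<open>v \<in> U\<close> are joined by two internally disjoint paths; deleting \<open>b1\<close> from them leaves
  an \<open>a1\<close>-\<open>a2\<close> path through \<open>v\<close> inside \<open>U\<close>. In \<open>G[U]\<close> every vertex has at most three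
  neighbours and each port at most two, so fewer than \<open>2^k\<close> vertices lie at distance less than
  \<open>k\<close> from a port. Hence if \<open>2^(k+1) \<le> |U|\<close>, some \<open>v\<close> is at distance at least \<open>k\<close> from both
  ports, and \<open>b1 a1 ... v ... a2 b2\<close> is a path of length at least \<open>2k + 2 > 2 log |U| - 2\<close>,
  which is more than the claimed bound.\<close>

lemma distinct_hd_eq_last_iff:
  assumes "distinct xs" "xs \<noteq> []"
  shows "hd xs = last xs \<longleftrightarrow> length xs = 1"
proof (cases xs)
  case (Cons x t)
  then show ?thesis using assms last_in_set[of t] by (cases "t = []") auto
qed (use assms in simp)

definition rel_walk :: "('a \<Rightarrow> 'a \<Rightarrow> bool) \<Rightarrow> 'a set \<Rightarrow> 'a list \<Rightarrow> bool" where
  "rel_walk R S p \<longleftrightarrow> p \<noteq> [] \<and> successively R p \<and> set p \<subseteq> S"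

definition rel_path :: "('a \<Rightarrow> 'a \<Rightarrow> bool) \<Rightarrow> 'a set \<Rightarrow> 'a list \<Rightarrow> bool" where
  "rel_path R S p \<longleftrightarrow> rel_walk R S p \<and> distinct p"

lemma rel_walk_ends_in_set:
  assumes "rel_walk R S p" shows "hd p \<in> set p" "last p \<in> set p"
  using assms by (simp_all add: rel_walk_def)

lemma rel_walk_singleton [simp]: "rel_walk R S [x] \<longleftrightarrow> x \<in> S"
  by (simp add: rel_walk_def)

lemma rel_walk_Cons:
  "rel_walk R S (x # p) \<longleftrightarrow> x \<in> S \<and> (p = [] \<or> R x (hd p) \<and> rel_walk R S p)"
  by (auto simp: rel_walk_def successively_Cons)

lemma rel_walk_append:
  assumes "p \<noteq> []" "q \<noteq> []"
  shows "rel_walk R S (p @ q) \<longleftrightarrow> rel_walk R S p \<and> rel_walk R S q \<and> R (last p) (hd q)"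
  using assms by (auto simp: rel_walk_def successively_append_iff)

lemma rel_walk_split:
  "rel_walk R S (p @ z # q) \<longleftrightarrow> rel_walk R S (p @ [z]) \<and> rel_walk R S (z # q)"
  by (cases "p = []") (auto simp: rel_walk_append rel_walk_Cons)

lemma rel_walk_rev:
  assumes "symp R"
  shows "rel_walk R S (rev p) \<longleftrightarrow> rel_walk R S p"
proof -
  have "successively (\<lambda>x y. R y x) p \<longleftrightarrow> successively R p"
    using assms by (intro successively_cong) (auto dest: sympD)
  then show ?thesis by (simp add: rel_walk_def)
qed

lemma rel_walk_subset: "rel_walk R S p \<Longrightarrow> S \<subseteq> S' \<Longrightarrow> rel_walk R S' p"
  by (auto simp: rel_walk_def)

lemma rel_walk_glue:
  assumes "rel_walk R S p" "rel_walk R S q" "last p = hd q"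
  shows "rel_walk R S (p @ tl q)" "hd (p @ tl q) = hd p" "last (p @ tl q) = last q"
proof -
  obtain z q' where q: "q = z # q'" using assms(2) by (cases q) (auto simp: rel_walk_def)
  have "p \<noteq> []" using assms(1) by (simp add: rel_walk_def)
  moreover have "z = last p" using assms(3) q by simp
  ultimately have p: "butlast p @ [z] = p" by simp
  have "rel_walk R S (butlast p @ z # q')"
    using assms(1,2) rel_walk_split[of R S "butlast p" z q'] p q by simp
  moreover have "butlast p @ z # q' = p @ tl q" using p[symmetric] q by simp
  ultimately show "rel_walk R S (p @ tl q)" by simp
  show "hd (p @ tl q) = hd p" "last (p @ tl q) = last q"
    using \<open>p \<noteq> []\<close> assms(3) q by auto
qed

lemma rel_walk_shortcut:
  assumes "rel_walk R S p"
  shows "\<exists>q. rel_path R S q \<and> hd q = hd p \<and> last q = last p \<and> set q \<subseteq> set p"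
  using assms
proof (induction "length p" arbitrary: p rule: less_induct)
  case less
  show ?case
  proof (cases "distinct p")
    case True
    then show ?thesis using less.prems by (auto simp: rel_path_def)
  next
    case False
    then obtain xs ys zs y where p: "p = xs @ [y] @ ys @ [y] @ zs"
      using not_distinct_decomp by blast
    have "rel_walk R S (xs @ y # ys @ y # zs)" using less.prems p by simp
    then have "rel_walk R S (xs @ [y])" "rel_walk R S (y # zs)"
      using rel_walk_split[of R S xs y "ys @ y # zs"] rel_walk_split[of R S "y # ys" y zs] by simp_all
    then have "rel_walk R S (xs @ [y] @ zs)" using rel_walk_split[of R S xs y zs] by simp
    moreover have "length (xs @ [y] @ zs) < length p" "set (xs @ [y] @ zs) \<subseteq> set p"
      unfolding p by auto
    moreover have "hd (xs @ [y] @ zs) = hd p" unfolding p by (cases xs) simp_all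
    moreover have "last (xs @ [y] @ zs) = last p" unfolding p by (cases zs) simp_all
    ultimately show ?thesis using less.hyps by (metis order_trans)
  qed
qed

lemma rel_path_join_rev:
  assumes "symp R"
    and "rel_path R S (X @ [v])" "rel_path R S (Y @ [v])" "set X \<inter> set Y = {}"
  shows "rel_path R S (X @ v # rev Y)"
proof -
  have "rel_walk R S (rev (Y @ [v]))"
    using assms(1,3) rel_walk_rev[of R S "Y @ [v]"] unfolding rel_path_def by blast
  then have "rel_walk R S (v # rev Y)" by simp
  then show ?thesis using assms(2-4) rel_walk_split[of R S X v "rev Y"] by (auto simp: rel_path_def)
qed

definition rel_connected :: "('a \<Rightarrow> 'a \<Rightarrow> bool) \<Rightarrow> 'a set \<Rightarrow> bool" where
  "rel_connected R S \<longleftrightarrow> (\<forall>x\<in>S. \<forall>y\<in>S. \<exists>p. rel_walk R S p \<and> hd p = x \<and> last p = y)"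

definition rel_two_connected :: "('a \<Rightarrow> 'a \<Rightarrow> bool) \<Rightarrow> 'a set \<Rightarrow> bool" where
  "rel_two_connected R S \<longleftrightarrow> 3 \<le> card S \<and> (\<forall>u\<in>S. rel_connected R (S - {u}))"

lemma rel_connectedI_hub:
  assumes sym: "symp R"
    and hub: "\<And>z. z \<in> S \<Longrightarrow> \<exists>p. rel_walk R S p \<and> hd p = z \<and> last p = c"
  shows "rel_connected R S"
  unfolding rel_connected_def
proof (intro ballI)
  fix x y assume "x \<in> S" "y \<in> S"
  then obtain p q where p: "rel_walk R S p" "hd p = x" "last p = c"
    and q: "rel_walk R S q" "hd q = y" "last q = c"
    using hub by meson
  have "rel_walk R S (rev q)" using rel_walk_rev[OF sym] q(1) by blast
  moreover have "hd (rev q) = c" "last (rev q) = y" using q by (simp_all add: hd_rev last_rev)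
  ultimately show "\<exists>p. rel_walk R S p \<and> hd p = x \<and> last p = y"
    using rel_walk_glue[OF p(1) \<open>rel_walk R S (rev q)\<close>] p by auto
qed

lemma third_element:
  assumes "3 \<le> card S"
  obtains u where "u \<in> S" "u \<noteq> x" "u \<noteq> y"
proof -
  have "card {x, y} < card S" using assms by (cases "x = y") simp_all
  then have "\<not> S \<subseteq> {x, y}" using card_mono[of "{x, y}" S] by auto
  then show ?thesis using that by blast
qed

definition two_disjoint_paths :: "('a \<Rightarrow> 'a \<Rightarrow> bool) \<Rightarrow> 'a set \<Rightarrow> 'a \<Rightarrow> 'a \<Rightarrow> bool" where
  "two_disjoint_paths R S x y \<longleftrightarrow> (\<exists>P Q. rel_path R S P \<and> rel_path R S Q \<and> P \<noteq> Q \<and>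
     hd P = x \<and> last P = y \<and> hd Q = x \<and> last Q = y \<and> set P \<inter> set Q = {x, y})"

lemma rel_path_avoiding_edge:
  assumes conn: "rel_two_connected R S" and "x \<in> S" "y \<in> S" "x \<noteq> y"
  shows "\<exists>Q. rel_path R S Q \<and> hd Q = x \<and> last Q = y \<and> Q \<noteq> [x, y]"
proof -
  txt \<open>Shortcut a walk \<open>x \<leadsto> w \<leadsto> y\<close> whose first part avoids \<open>y\<close> and whose second part
    avoids \<open>x\<close>: it never steps between \<open>x\<close> and \<open>y\<close>.\<close>
  define R' where "R' a b \<longleftrightarrow> R a b \<and> {a, b} \<noteq> {x, y}" for a b
  obtain w where w: "w \<in> S" "w \<noteq> x" "w \<noteq> y"
    using conn third_element unfolding rel_two_connected_def by metis
  obtain p1 where p1: "rel_walk R (S - {y}) p1" "hd p1 = x" "last p1 = w"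
    using conn assms w unfolding rel_two_connected_def rel_connected_def by blast
  obtain p2 where p2: "rel_walk R (S - {x}) p2" "hd p2 = w" "last p2 = y"
    using conn assms w unfolding rel_two_connected_def rel_connected_def by blast
  have "rel_walk R' S p1" "rel_walk R' S p2"
    using p1(1) p2(1) by (auto simp: R'_def rel_walk_def doubleton_eq_iff intro: successively_mono)
  then obtain Q where Q: "rel_path R' S Q" "hd Q = x" "last Q = y"
    using rel_walk_glue[of R' S p1 p2] rel_walk_shortcut[of R' S "p1 @ tl p2"] p1 p2 by auto
  have "Q \<noteq> [x, y]" using Q(1) by (auto simp: rel_path_def rel_walk_def R'_def)
  moreover have "rel_path R S Q"
    using Q(1) by (auto simp: rel_path_def rel_walk_def R'_def intro: successively_mono)
  ultimately show ?thesis using Q by blast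
qed

lemma two_disjoint_paths_edge:
  assumes "rel_two_connected R S" "x \<in> S" "y \<in> S" "x \<noteq> y" "R x y"
  shows "two_disjoint_paths R S x y"
proof -
  obtain Q where Q: "rel_path R S Q" "hd Q = x" "last Q = y" "Q \<noteq> [x, y]"
    using rel_path_avoiding_edge[OF assms(1-4)] by blast
  have "x \<in> set Q" "y \<in> set Q" using Q rel_walk_ends_in_set by (auto simp: rel_path_def)
  moreover have "rel_path R S [x, y]" using assms by (simp add: rel_path_def rel_walk_Cons)
  ultimately show ?thesis unfolding two_disjoint_paths_def using Q by (intro exI[of _ "[x, y]"] exI[of _ Q]) auto
qed

lemma two_disjoint_paths_splice:
  assumes P: "rel_path R S P" "hd P = x" "last P = w"
    and Q: "rel_path R S Q" "hd Q = x" "last Q = w"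
    and PQ: "set P \<inter> set Q = {x, w}" and "x \<noteq> w"
    and y: "R w y" "y \<noteq> x" "y \<noteq> w"
    and r: "rel_path R (S - {w}) (r1 @ z # r2)" "last (z # r2) = y"
    and z: "z \<in> set P" "set r2 \<inter> (set P \<union> set Q) = {}"
  shows "two_disjoint_paths R S x y"
proof -
  txt \<open>\<open>z\<close> is the last vertex of \<open>r\<close> on \<open>P \<union> Q\<close>: follow \<open>P\<close> up to \<open>z\<close>, then \<open>r\<close>;
    extend \<open>Q\<close> by the edge \<open>w y\<close>.\<close>
  obtain P1 P2 where P12: "P = P1 @ z # P2" using z(1) split_list by metis
  define P' where "P' = P1 @ z # r2"
  define Q' where "Q' = Q @ [y]"
  have "z \<noteq> w" using r(1) by (auto simp: rel_path_def rel_walk_def)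
  then have "w \<in> set P2" using P(3) P12 by (cases P2) auto
  then have wP1: "w \<notin> set (P1 @ [z])" using P(1) P12 \<open>z \<noteq> w\<close> by (auto simp: rel_path_def)
  have w_r2: "w \<notin> set r2" using r(1) by (auto simp: rel_path_def rel_walk_def)
  have yQ: "y \<notin> set Q"
  proof (cases "r2 = []")
    case True
    then show ?thesis using r(2) z(1) PQ y by auto
  next
    case False
    then show ?thesis using r(2) z(2) last_in_set[of r2] by auto
  qed
  have "rel_walk R S (P1 @ [z])" "rel_walk R S (z # r2)"
    using P(1) r(1) rel_walk_split[of R S P1 z P2] rel_walk_split[of R "S - {w}" r1 z r2]
    by (auto simp: P12 rel_path_def elim: rel_walk_subset)
  moreover have "distinct (P1 @ z # r2)"
    using P(1) r(1) z(2) by (auto simp: P12 rel_path_def)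
  ultimately have P': "rel_path R S P'" "hd P' = x" "last P' = y"
    using rel_walk_split[of R S P1 z r2] P(2) r(2) by (auto simp: P'_def P12 rel_path_def hd_append)
  have "y \<in> S" using r last_in_set[of "z # r2"] by (auto simp: rel_path_def rel_walk_def)
  then have Q': "rel_path R S Q'" "hd Q' = x" "last Q' = y"
    using Q y yQ by (auto simp: Q'_def rel_path_def rel_walk_def successively_append_iff)
  have "w \<in> set Q'" using Q by (auto simp: Q'_def rel_path_def rel_walk_def)
  then have "P' \<noteq> Q'" using wP1 w_r2 by (auto simp: P'_def)
  moreover have "set P' \<inter> set Q' = {x, y}"
  proof
    show "{x, y} \<subseteq> set P' \<inter> set Q'"
      using P' Q' rel_walk_ends_in_set by (fastforce simp: rel_path_def)
    show "set P' \<inter> set Q' \<subseteq> {x, y}"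
      using PQ z(2) wP1 by (auto simp: P'_def Q'_def P12)
  qed
  ultimately show ?thesis unfolding two_disjoint_paths_def using P' Q' by blast
qed

lemma two_disjoint_paths_step:
  assumes "two_disjoint_paths R S x w" "x \<noteq> w" "R w y" "y \<noteq> x" "y \<noteq> w"
    and r: "rel_path R (S - {w}) r" "hd r = x" "last r = y"
  shows "two_disjoint_paths R S x y"
proof -
  obtain P Q where PQ: "rel_path R S P" "hd P = x" "last P = w" "rel_path R S Q" "hd Q = x"
      "last Q = w" "set P \<inter> set Q = {x, w}"
    using assms(1) unfolding two_disjoint_paths_def by blast
  have "hd r \<in> set r" "hd r \<in> set P"
    using PQ(1,2) r rel_walk_ends_in_set by (fastforce simp: rel_path_def)+
  then obtain r1 z r2 where r12: "r = r1 @ z # r2" "z \<in> set P \<union> set Q"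
      "\<forall>u\<in>set r2. u \<notin> set P \<union> set Q"
    using split_list_last_prop[of r "\<lambda>u. u \<in> set P \<union> set Q"] by blast
  have r': "rel_path R (S - {w}) (r1 @ z # r2)" "last (z # r2) = y" using r r12(1) by simp_all
  show ?thesis
  proof (cases "z \<in> set P")
    case True
    then show ?thesis using two_disjoint_paths_splice[OF PQ assms(2-5) r'] r12(3) by blast
  next
    case False
    then have "z \<in> set Q" using r12(2) by blast
    moreover have "set Q \<inter> set P = {x, w}" using PQ(7) by blast
    ultimately show ?thesis
      using two_disjoint_paths_splice[OF PQ(4-6) PQ(1-3) _ assms(2-5) r'] r12(3) by blast
  qed
qed

lemma two_disjoint_paths_along_path:
  assumes conn: "rel_two_connected R S"
  shows "rel_path R S p \<Longrightarrow> 2 \<le> length p \<Longrightarrow> two_disjoint_paths R S (hd p) (last p)"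
proof (induction p rule: rev_induct)
  case (snoc y p)
  have "p \<noteq> []" using snoc.prems(2) by auto
  then have p: "p \<noteq> []" "rel_path R S p" "R (last p) y" "y \<notin> set p" "y \<in> S"
    using snoc.prems(1) rel_walk_append[of p "[y]" R S] by (auto simp: rel_path_def)
  show ?case
  proof (cases "length p = 1")
    case True
    then obtain x where "p = [x]" by (cases p) auto
    then show ?thesis using two_disjoint_paths_edge[OF conn] p by (auto simp: rel_path_def)
  next
    case False
    define x w where "x = hd p" and "w = last p"
    have "length p \<noteq> 0" using p(1) by simp
    with False have "2 \<le> length p" by linarith
    then have IH: "two_disjoint_paths R S x w" using snoc.IH p(2) by (simp add: x_def w_def)
    have "x \<noteq> w" using p(1,2) False distinct_hd_eq_last_iff
      by (auto simp: x_def w_def rel_path_def)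
    have "x \<in> set p" "w \<in> set p" "set p \<subseteq> S"
      using p(2) rel_walk_ends_in_set by (auto simp: x_def w_def rel_path_def rel_walk_def)
    then obtain r0 where r0: "rel_walk R (S - {w}) r0" "hd r0 = x" "last r0 = y"
      using conn p(4,5) \<open>x \<noteq> w\<close> unfolding rel_two_connected_def rel_connected_def by blast
    obtain r where "rel_path R (S - {w}) r" "hd r = x" "last r = y"
      using rel_walk_shortcut[OF r0(1)] r0 by auto
    then show ?thesis
      using two_disjoint_paths_step[OF IH \<open>x \<noteq> w\<close>] p(1,3,4) \<open>x \<in> set p\<close> \<open>w \<in> set p\<close>
      by (fastforce simp: x_def w_def)
  qed
qed simp

theorem rel_two_connected_two_disjoint_paths:
  assumes conn: "rel_two_connected R S" and "x \<in> S" "y \<in> S" "x \<noteq> y"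
  shows "two_disjoint_paths R S x y"
proof -
  obtain u where "u \<in> S" "u \<noteq> x" "u \<noteq> y"
    using conn third_element unfolding rel_two_connected_def by metis
  then obtain p0 where "rel_walk R (S - {u}) p0" "hd p0 = x" "last p0 = y"
    using conn assms unfolding rel_two_connected_def rel_connected_def by blast
  then obtain p where p: "rel_path R S p" "hd p = x" "last p = y"
    using rel_walk_shortcut[of R S p0] rel_walk_subset by fastforce
  then have "length p \<noteq> 1" "length p \<noteq> 0"
    using assms distinct_hd_eq_last_iff by (auto simp: rel_path_def rel_walk_def)
  then have "2 \<le> length p" by linarith
  then show ?thesis using two_disjoint_paths_along_path[OF conn p(1)] p by simp
qed

text \<open>The vertices at distance less than \<open>k\<close> from \<open>a\<close>: a walk with at most \<open>k\<close> vertices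
  has fewer than \<open>k\<close> edges.\<close>

definition rel_ball :: "('a \<Rightarrow> 'a \<Rightarrow> bool) \<Rightarrow> 'a set \<Rightarrow> 'a \<Rightarrow> nat \<Rightarrow> 'a set" where
  "rel_ball R S a k = {u. \<exists>q. rel_walk R S q \<and> hd q = a \<and> last q = u \<and> length q \<le> k}"

lemma rel_ball_subset: "rel_ball R S a k \<subseteq> S"
  by (auto simp: rel_ball_def rel_walk_def)

lemma finite_rel_ball: "finite S \<Longrightarrow> finite (rel_ball R S a k)"
  using rel_ball_subset finite_subset by metis

lemma rel_ball_0 [simp]: "rel_ball R S a 0 = {}"
  by (auto simp: rel_ball_def rel_walk_def)

lemma rel_ball_1: "rel_ball R S a (Suc 0) \<subseteq> {a}"
  by (auto simp: rel_ball_def rel_walk_def le_Suc_eq length_Suc_conv)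

lemma center_in_rel_ball: "a \<in> S \<Longrightarrow> a \<in> rel_ball R S a (Suc k)"
  unfolding rel_ball_def by (intro CollectI exI[of _ "[a]"]) simp

lemma rel_ball_mono: "k \<le> k' \<Longrightarrow> rel_ball R S a k \<subseteq> rel_ball R S a k'"
  unfolding rel_ball_def by fastforce

lemma rel_ball_Suc_extend:
  assumes "w \<in> rel_ball R S a k" "R w u" "u \<in> S"
  shows "u \<in> rel_ball R S a (Suc k)"
proof -
  obtain q where q: "rel_walk R S q" "hd q = a" "last q = w" "length q \<le> k"
    using assms(1) unfolding rel_ball_def by blast
  then have "rel_walk R S (q @ [u])" "hd (q @ [u]) = a"
    using assms(2,3) rel_walk_append[of q "[u]"] by (auto simp: rel_walk_def)
  then show ?thesis unfolding rel_ball_def using q(4) by (intro CollectI exI[of _ "q @ [u]"]) simp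
qed

lemma rel_ball_Suc_predecessor:
  assumes "u \<in> rel_ball R S a (Suc k)" "u \<noteq> a"
  shows "\<exists>w\<in>rel_ball R S a k. R w u"
proof -
  obtain q where q: "rel_walk R S q" "hd q = a" "last q = u" "length q \<le> Suc k"
    using assms(1) unfolding rel_ball_def by blast
  then obtain q' where q': "q = q' @ [u]" by (metis append_butlast_last_id rel_walk_def)
  then have "q' \<noteq> []" using q(2,3) assms(2) by auto
  then have "rel_walk R S q'" "R (last q') u" "hd q' = a"
    using q q' rel_walk_append[of q' "[u]"] by auto
  then have "last q' \<in> rel_ball R S a k" unfolding rel_ball_def using q(4) q' by auto
  then show ?thesis using \<open>R (last q') u\<close> by blast
qed

context
  fixes R :: "'a \<Rightarrow> 'a \<Rightarrow> bool" and S :: "'a set" and a :: 'a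
  assumes finite: "finite S" and sym: "symp R" and a: "a \<in> S"
    and degree_le_3: "\<And>u. u \<in> S \<Longrightarrow> card {v\<in>S. R u v} \<le> 3"
    and degree_center_le_2: "card {v\<in>S. R a v} \<le> 2"
begin

lemma card_new_neighbours_le_2:
  assumes w: "w \<in> rel_ball R S a (Suc k) - rel_ball R S a k"
  shows "card ({v\<in>S. R w v} - rel_ball R S a k) \<le> 2"
  \<comment> \<open>for \<open>k > 0\<close>, the predecessor of \<open>w\<close> on a walk from \<open>a\<close> is a neighbour inside the ball\<close>
proof (cases k)
  case 0
  then have "w = a" using w rel_ball_1[of R S a] by auto
  then show ?thesis using 0 degree_center_le_2 by simp
next
  case (Suc k')
  then have "w \<noteq> a" using w center_in_rel_ball[OF a] by auto
  then obtain w' where w': "w' \<in> rel_ball R S a k" "R w' w"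
    using w rel_ball_Suc_predecessor[of w R S a k] by blast
  then have w'_nbr: "w' \<in> {v\<in>S. R w v} \<inter> rel_ball R S a k"
    using sympD[OF sym w'(2)] rel_ball_subset[of R S a k] by blast
  then have "card ({v\<in>S. R w v} - rel_ball R S a k) \<le> card ({v\<in>S. R w v} - {w'})"
    using finite by (intro card_mono) auto
  also have "\<dots> = card {v\<in>S. R w v} - 1"
    using w'_nbr finite by (intro card_Diff_singleton) auto
  also have "\<dots> \<le> 2" using degree_le_3[of w] w rel_ball_subset by fastforce
  finally show ?thesis .
qed

lemma card_rel_sphere_le: "card (rel_ball R S a (Suc k) - rel_ball R S a k) \<le> 2 ^ k"
proof (induction k)
  case 0
  show ?case using rel_ball_1[of R S a] card_mono[of "{a}"] by auto
next
  case (Suc k)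
  define sphere where "sphere = rel_ball R S a (Suc k) - rel_ball R S a k"
  have "rel_ball R S a (Suc (Suc k)) - rel_ball R S a (Suc k)
      \<subseteq> (\<Union>w\<in>sphere. {v\<in>S. R w v} - rel_ball R S a k)"
  proof
    fix u assume u: "u \<in> rel_ball R S a (Suc (Suc k)) - rel_ball R S a (Suc k)"
    moreover have "a \<in> rel_ball R S a (Suc k)" by (rule center_in_rel_ball[OF a])
    ultimately obtain w where w: "w \<in> rel_ball R S a (Suc k)" "R w u"
      using rel_ball_Suc_predecessor[of u R S a "Suc k"] by blast
    have "u \<in> S" using u rel_ball_subset[of R S a "Suc (Suc k)"] by blast
    then have "w \<notin> rel_ball R S a k" using u w(2) rel_ball_Suc_extend[of w R S a k u] by blast
    then have "w \<in> sphere" using w(1) unfolding sphere_def by blast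
    moreover have "u \<notin> rel_ball R S a k" using u rel_ball_mono[of k "Suc k" R S a] by auto
    ultimately show "u \<in> (\<Union>w\<in>sphere. {v\<in>S. R w v} - rel_ball R S a k)"
      using w(2) \<open>u \<in> S\<close> by blast
  qed
  then have "card (rel_ball R S a (Suc (Suc k)) - rel_ball R S a (Suc k))
      \<le> card (\<Union>w\<in>sphere. {v\<in>S. R w v} - rel_ball R S a k)"
    using finite by (intro card_mono) (auto intro: finite_subset)
  also have "\<dots> \<le> (\<Sum>w\<in>sphere. card ({v\<in>S. R w v} - rel_ball R S a k))"
    by (rule card_UN_le) (simp add: sphere_def finite_rel_ball[OF finite])
  also have "\<dots> \<le> (\<Sum>w\<in>sphere. 2)"
    using card_new_neighbours_le_2 by (intro sum_mono) (simp add: sphere_def)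
  also have "\<dots> \<le> 2 ^ Suc k" using Suc.IH by (simp add: sphere_def)
  finally show ?case .
qed

lemma card_rel_ball_less: "card (rel_ball R S a k) < 2 ^ k"
proof (induction k)
  case (Suc k)
  have "card (rel_ball R S a (Suc k))
      \<le> card (rel_ball R S a k \<union> (rel_ball R S a (Suc k) - rel_ball R S a k))"
    by (intro card_mono) (auto simp: finite_rel_ball[OF finite])
  also have "\<dots> \<le> card (rel_ball R S a k) + card (rel_ball R S a (Suc k) - rel_ball R S a k)"
    by (rule card_Un_le)
  finally show ?case using Suc.IH card_rel_sphere_le[of k] by simp
qed simp

end

lemma rel_walk_adjacent_iff:
  "rel_walk (adjacent E ends) S p \<longleftrightarrow> walk E ends p \<and> set p \<subseteq> S"
  by (auto simp: rel_walk_def walk_def successively_conv_nth)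

lemma symp_adjacent: "symp (adjacent E ends)"
  by (auto simp: symp_def adjacent_def insert_commute)

lemma card_adjacent_le:
  assumes "finite E"
  shows "card {y\<in>W. adjacent E ends x y} \<le> card {e\<in>E. x \<in> ends e \<and> ends e - {x} \<subseteq> W}"
proof -
  define g where "g y = (SOME e. e \<in> E \<and> ends e = {x, y})" for y
  have g: "g y \<in> E \<and> ends (g y) = {x, y}" if "adjacent E ends x y" for y
    using that unfolding adjacent_def g_def by (metis (mono_tags, lifting) someI_ex)
  have "inj_on g {y\<in>W. adjacent E ends x y}"
    by (rule inj_onI) (metis g doubleton_eq_iff mem_Collect_eq)
  moreover have "g ` {y\<in>W. adjacent E ends x y} \<subseteq> {e\<in>E. x \<in> ends e \<and> ends e - {x} \<subseteq> W}"
    using g by auto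
  ultimately show ?thesis using assms by (intro card_inj_on_le) auto
qed

locale peninsula =
  fixes V :: "'v set" and E :: "'e set" and ends :: "'e \<Rightarrow> 'v set"
    and U :: "'v set" and e1 e2 :: 'e and a1 a2 b1 b2 :: 'v
  assumes multigraph: "multigraph V E ends"
    and cubic: "cubic V E ends"
    and two_connected: "two_connected V E ends"
    and tombolo_cut: "tombolo_cut V E ends U"
    and cut_set: "cut_set E ends U = {e1, e2}"
    and e1: "ends e1 = {a1, b1}" "a1 \<in> U" "b1 \<notin> U"
    and e2: "ends e2 = {a2, b2}" "a2 \<in> U" "b2 \<notin> U"
begin

abbreviation adj :: "'v \<Rightarrow> 'v \<Rightarrow> bool" where "adj \<equiv> adjacent E ends"

lemma finite_E: "finite E" and finite_V: "finite V"
  using multigraph by (simp_all add: multigraph_def)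

lemma U_subset_V: "U \<subseteq> V"
  using tombolo_cut by (simp add: tombolo_cut_def)

lemma finite_U: "finite U"
  using finite_V U_subset_V finite_subset by blast

lemma e1_in_E: "e1 \<in> E" and e2_in_E: "e2 \<in> E"
  using cut_set by (auto simp: cut_set_def)

lemma b1_in_V: "b1 \<in> V"
  using multigraph e1_in_E e1(1) by (auto simp: multigraph_def)

lemma adj_across_cut:
  assumes "adj x y" "x \<in> U" "y \<notin> U"
  shows "(x = a1 \<and> y = b1) \<or> (x = a2 \<and> y = b2)"
proof -
  obtain e where e: "e \<in> E" "ends e = {x, y}" using assms(1) by (auto simp: adjacent_def)
  then have "e \<in> {e1, e2}" using assms(2,3) cut_set by (auto simp: cut_set_def)
  then show ?thesis using e(2) e1 e2 assms(2,3) by (auto simp: doubleton_eq_iff)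
qed

lemma walk_avoiding:
  assumes "w \<in> V" "x \<in> V - {w}" "y \<in> V - {w}"
  shows "\<exists>p. rel_walk adj (V - {w}) p \<and> hd p = x \<and> last p = y"
proof -
  have "connected_on E ends (V - {w})" using two_connected assms(1) by (simp add: two_connected_def)
  then obtain p where "walk E ends p" "set p \<subseteq> V - {w}" "hd p = x" "last p = y"
    using assms(2,3) unfolding connected_on_def by blast
  then show ?thesis by (auto simp: rel_walk_adjacent_iff)
qed

lemma walk_exits_through_port:
  assumes "rel_walk adj T p" "hd p \<in> U" "\<not> set p \<subseteq> U"
  shows "\<exists>q. rel_walk adj (U \<inter> T) q \<and> hd q = hd p \<and>
    (last q = a1 \<and> b1 \<in> T \<or> last q = a2 \<and> b2 \<in> T)"
proof -
  obtain ys x zs where p: "p = ys @ x # zs" "x \<notin> U" "\<forall>y\<in>set ys. y \<in> U"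
    using split_list_first_prop[of p "\<lambda>y. y \<notin> U"] assms(3) by blast
  have "ys \<noteq> []" using assms(2) p by auto
  have "rel_walk adj T (ys @ [x])" using assms(1) rel_walk_split[of adj T ys x zs] p(1) by simp
  then have ys: "rel_walk adj T ys" "adj (last ys) x" "x \<in> T"
    using rel_walk_append[OF \<open>ys \<noteq> []\<close>, of "[x]" adj T] by (auto simp: rel_walk_def)
  have "set ys \<subseteq> U" using p(3) by blast
  then have "rel_walk adj (U \<inter> T) ys" "last ys \<in> U"
    using ys(1) \<open>ys \<noteq> []\<close> by (auto simp: rel_walk_def)
  moreover have "hd ys = hd p" using p(1) \<open>ys \<noteq> []\<close> by simp
  ultimately show ?thesis using adj_across_cut[OF ys(2) _ p(2)] ys(3) by blast
qed

lemma neighbour_on_same_side: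
  assumes "x \<in> V"
  obtains y where "adj x y" "y \<noteq> x" "y \<in> V" "y \<in> U \<longleftrightarrow> x \<in> U"
proof -
  have "card {e\<in>E. x \<in> ends e} = 3" using cubic assms by (simp add: cubic_def degree_def)
  then obtain e where e: "e \<in> E" "x \<in> ends e" "e \<noteq> e1" "e \<noteq> e2"
    by (metis (no_types, lifting) third_element mem_Collect_eq order_refl)
  have "card (ends e) = 2" "ends e \<subseteq> V" using multigraph e(1) by (auto simp: multigraph_def)
  then obtain y where y: "ends e = {x, y}" "y \<noteq> x"
    using e(2) by (auto simp: card_2_iff doubleton_eq_iff)
  have "e \<notin> cut_set E ends U" using e cut_set by blast
  then have "y \<in> U \<longleftrightarrow> x \<in> U" using e(1) y by (auto simp: cut_set_def)
  then show ?thesis using that[of y] e(1) y \<open>ends e \<subseteq> V\<close> by (auto simp: adjacent_def)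
qed

lemma two_le_card_U: "2 \<le> card U"
proof -
  obtain y where "y \<noteq> a1" "y \<in> U"
    using neighbour_on_same_side[of a1] e1(2) U_subset_V by blast
  then have "card {a1, y} \<le> card U" using e1(2) finite_U by (intro card_mono) auto
  then show ?thesis using \<open>y \<noteq> a1\<close> by simp
qed

lemma b1_neq_b2: "b1 \<noteq> b2"
proof
  assume "b1 = b2"
  obtain y where y: "y \<noteq> b1" "y \<in> V" "y \<notin> U"
    using neighbour_on_same_side[OF b1_in_V] e1(3) by metis
  obtain p where p: "rel_walk adj (V - {b1}) p" "hd p = a1" "last p = y"
    using walk_avoiding[of b1 a1 y] b1_in_V e1 y U_subset_V by auto
  have "\<not> set p \<subseteq> U" using p y rel_walk_ends_in_set by blast
  then show False using walk_exits_through_port[OF p(1)] p(2) e1(2) \<open>b1 = b2\<close> by auto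
qed

lemma walk_in_U_to_a2:
  assumes "x \<in> U"
  shows "\<exists>p. rel_walk adj U p \<and> hd p = x \<and> last p = a2"
proof -
  obtain p where p: "rel_walk adj (V - {b1}) p" "hd p = x" "last p = a2"
    using walk_avoiding[of b1 x a2] assms b1_in_V e1(3) e2(2) U_subset_V by auto
  show ?thesis
  proof (cases "set p \<subseteq> U")
    case True
    then show ?thesis using p by (auto simp: rel_walk_def)
  next
    case False
    then show ?thesis
      using walk_exits_through_port[OF p(1)] p(2) assms rel_walk_subset[of adj "U \<inter> (V - {b1})" _ U]
      by auto
  qed
qed

definition contracted :: "'v \<Rightarrow> 'v \<Rightarrow> bool" where
  "contracted x y \<longleftrightarrow> (x \<in> U \<and> y \<in> U \<and> adj x y) \<or> {x, y} = {a1, b1} \<or> {x, y} = {a2, b1}"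

lemma symp_contracted: "symp contracted"
  by (auto simp: symp_def contracted_def insert_commute intro: sympD[OF symp_adjacent])

lemma rel_walk_contracted_iff:
  assumes "S \<subseteq> U"
  shows "rel_walk contracted S p \<longleftrightarrow> rel_walk adj S p"
proof -
  have eq: "contracted x y \<longleftrightarrow> adj x y" if "x \<in> U" "y \<in> U" for x y
    using that e1(3) by (auto simp: contracted_def doubleton_eq_iff)
  have "set p \<subseteq> S \<Longrightarrow> successively contracted p \<longleftrightarrow> successively adj p"
    by (intro successively_cong refl) (metis assms eq subsetD)
  then show ?thesis by (auto simp: rel_walk_def)
qed

lemma contracted_connected_minus_b1: "rel_connected contracted U"
  using rel_connectedI_hub[OF symp_contracted, of U a2] walk_in_U_to_a2
    rel_walk_contracted_iff[of U] by blast

lemma contracted_connected_minus_inner: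
  assumes "u \<in> U"
  shows "rel_connected contracted (insert b1 U - {u})"
proof (rule rel_connectedI_hub[of _ _ b1])
  fix z assume z: "z \<in> insert b1 U - {u}"
  show "\<exists>p. rel_walk contracted (insert b1 U - {u}) p \<and> hd p = z \<and> last p = b1"
  proof (cases "z = b1")
    case True
    then show ?thesis using z by (intro exI[of _ "[b1]"]) simp
  next
    case False
    then have "z \<in> U - {u}" using z by blast
    then obtain p where p: "rel_walk adj (V - {u}) p" "hd p = z" "last p = b1"
      using walk_avoiding[of u z b1] assms b1_in_V e1(3) U_subset_V by auto
    have "\<not> set p \<subseteq> U" using p(1,3) e1(3) rel_walk_ends_in_set by blast
    then obtain q where q: "rel_walk adj (U \<inter> (V - {u})) q" "hd q = z" "last q = a1 \<or> last q = a2"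
      using walk_exits_through_port[OF p(1)] p(2) \<open>z \<in> U - {u}\<close> by blast
    have "U \<inter> (V - {u}) = U - {u}" using U_subset_V by blast
    then have "rel_walk contracted (U - {u}) q" using q(1) rel_walk_contracted_iff[of "U - {u}"] by auto
    then have "rel_walk contracted (insert b1 U - {u}) q" by (rule rel_walk_subset) blast
    moreover have "contracted (last q) b1" using q(3) by (auto simp: contracted_def)
    moreover have "q \<noteq> []" using q(1) by (simp add: rel_walk_def)
    ultimately have "rel_walk contracted (insert b1 U - {u}) (q @ [b1])"
      using rel_walk_append[of q "[b1]"] assms e1(3) by auto
    then show ?thesis using q(2) \<open>q \<noteq> []\<close> by (intro exI[of _ "q @ [b1]"]) simp
  qed
qed (rule symp_contracted)

lemma contracted_two_connected: "rel_two_connected contracted (insert b1 U)"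
  unfolding rel_two_connected_def
proof
  show "3 \<le> card (insert b1 U)" using two_le_card_U finite_U e1(3) by simp
  have "insert b1 U - {b1} = U" using e1(3) by blast
  then show "\<forall>u\<in>insert b1 U. rel_connected contracted (insert b1 U - {u})"
    using contracted_connected_minus_b1 contracted_connected_minus_inner by auto
qed

lemma contracted_path_from_b1:
  assumes "rel_path contracted (insert b1 U) P" "hd P = b1" "last P \<in> U"
  obtains P' where "P = b1 # P'" "rel_path adj U P'" "hd P' = a1 \<or> hd P' = a2"
proof -
  obtain P' where P: "P = b1 # P'"
    using assms(1,2) by (cases P) (auto simp: rel_path_def rel_walk_def)
  have "P' \<noteq> []" using assms(3) e1(3) P by auto
  have "set P' \<subseteq> U" using assms(1) P by (auto simp: rel_path_def rel_walk_def)
  moreover have "contracted b1 (hd P')" "rel_walk contracted (insert b1 U) P'"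
    using assms(1) P \<open>P' \<noteq> []\<close> by (auto simp: rel_path_def rel_walk_Cons)
  ultimately have "rel_walk adj U P'" "hd P' = a1 \<or> hd P' = a2"
    using rel_walk_contracted_iff[of U P'] rel_walk_subset \<open>P' \<noteq> []\<close> e1(3)
    by (auto simp: rel_walk_def contracted_def doubleton_eq_iff)
  then show ?thesis using that P assms(1) by (auto simp: rel_path_def)
qed

lemma disjoint_port_paths:
  assumes "v \<in> U"
  obtains X Y where "rel_path adj U (X @ [v])" "rel_path adj U (Y @ [v])"
    "hd (X @ [v]) = a1" "hd (Y @ [v]) = a2" "set X \<inter> set Y = {}"
proof -
  obtain P Q where PQ: "rel_path contracted (insert b1 U) P" "rel_path contracted (insert b1 U) Q"
      "P \<noteq> Q" "hd P = b1" "last P = v" "hd Q = b1" "last Q = v" "set P \<inter> set Q = {b1, v}"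
    using rel_two_connected_two_disjoint_paths[OF contracted_two_connected, of b1 v] assms e1(3)
    unfolding two_disjoint_paths_def by auto
  obtain P' where P': "P = b1 # P'" "rel_path adj U P'" "hd P' = a1 \<or> hd P' = a2"
    using contracted_path_from_b1 PQ(1,4,5) assms by metis
  obtain Q' where Q': "Q = b1 # Q'" "rel_path adj U Q'" "hd Q' = a1 \<or> hd Q' = a2"
    using contracted_path_from_b1 PQ(2,6,7) assms by metis
  define X Y where "X = butlast P'" and "Y = butlast Q'"
  have "P' \<noteq> []" "Q' \<noteq> []" using P'(2) Q'(2) by (auto simp: rel_path_def rel_walk_def)
  moreover have "last P' = v" "last Q' = v" using PQ(5,7) P'(1) Q'(1) calculation by auto
  ultimately have XY: "P' = X @ [v]" "Q' = Y @ [v]"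
    unfolding X_def Y_def by (metis append_butlast_last_id)+
  have "b1 \<notin> set P'" using PQ(1) P'(1) by (simp add: rel_path_def)
  then have "set P' \<inter> set Q' \<subseteq> {v}" using PQ(8) P'(1) Q'(1) by auto
  then have disjoint: "set X \<inter> set Y = {}" using P'(2) XY by (auto simp: rel_path_def)
  have "hd P' \<noteq> hd Q'"
  proof
    assume "hd P' = hd Q'"
    then have "hd P' = v" "hd Q' = v"
      using \<open>set P' \<inter> set Q' \<subseteq> {v}\<close> \<open>P' \<noteq> []\<close> \<open>Q' \<noteq> []\<close> hd_in_set[of P'] hd_in_set[of Q']
      by auto
    then have "X = []" "Y = []" using P'(2) Q'(2) XY by (cases X; cases Y; auto simp: rel_path_def)+
    then have "P' = [v]" "Q' = [v]" using XY by auto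
    then show False using PQ(3) P'(1) Q'(1) by simp
  qed
  then show ?thesis
    using that[of X Y] that[of Y X] P'(2,3) Q'(2,3) XY disjoint Int_commute[of "set X"] by metis
qed

lemma port_path_through:
  assumes "v \<in> U"
  obtains q1 q2 where "rel_path adj U (q1 @ v # q2)" "hd (q1 @ [v]) = a1" "last (v # q2) = a2"
proof -
  obtain X Y where XY: "rel_path adj U (X @ [v])" "rel_path adj U (Y @ [v])"
      "hd (X @ [v]) = a1" "hd (Y @ [v]) = a2" "set X \<inter> set Y = {}"
    using disjoint_port_paths assms by blast
  have "last (v # rev Y) = hd (Y @ [v])" by (cases Y) simp_all
  then show ?thesis using that rel_path_join_rev[OF symp_adjacent XY(1,2,5)] XY(3,4) by simp
qed

lemma long_port_path:
  assumes "v \<in> U" "v \<notin> rel_ball adj U a1 k" "v \<notin> rel_ball adj U a2 k"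
  shows "\<exists>p. path E ends p \<and> hd p = b1 \<and> last p = b2 \<and> set (butlast (tl p)) \<subseteq> U \<and>
    2 * k + 2 \<le> path_length p"
proof -
  obtain q1 q2 where q: "rel_path adj U (q1 @ v # q2)" "hd (q1 @ [v]) = a1" "last (v # q2) = a2"
    using port_path_through assms(1) by blast
  have walks: "rel_walk adj U (q1 @ [v])" "rel_walk adj U (v # q2)"
    using q(1) rel_walk_split[of adj U q1 v q2] by (auto simp: rel_path_def)
  have "rel_walk adj U (rev (v # q2))"
    using walks(2) rel_walk_rev[OF symp_adjacent, where S = U and p = "v # q2"] by blast
  moreover have "last (q1 @ [v]) = v" "hd (rev (v # q2)) = a2" "last (rev (v # q2)) = v"
    using q(3) by (simp_all only: last_snoc hd_rev last_rev list.sel(1))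
  ultimately have far: "k < length (q1 @ [v])" "k < length (rev (v # q2))"
    using walks(1) assms(2,3) q(2) unfolding rel_ball_def
    by (metis (mono_tags, lifting) mem_Collect_eq not_le)+
  define q where "q = q1 @ v # q2"
  have length: "2 * k + 1 \<le> length q" using far by (simp add: q_def)
  have "q \<noteq> []" "hd q = a1" "last q = a2" using q(2,3) by (cases q1; simp add: q_def)+
  moreover have "adj b1 a1" "adj a2 b2"
    using e1_in_E e1(1) e2_in_E e2(1) by (auto simp: adjacent_def insert_commute)
  moreover have "rel_walk adj UNIV q" using q(1) by (auto simp: q_def rel_path_def rel_walk_def)
  ultimately have "rel_walk adj UNIV (q @ [b2])" "hd (q @ [b2]) = a1"
    using rel_walk_append[of q "[b2]" adj UNIV] by auto
  then have "rel_walk adj UNIV (b1 # q @ [b2])" using \<open>adj b1 a1\<close> by (simp add: rel_walk_Cons)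
  moreover have "distinct (b1 # q @ [b2])" "set q \<subseteq> U"
    using q(1) e1(3) e2(3) b1_neq_b2 by (auto simp: q_def rel_path_def rel_walk_def)
  ultimately show ?thesis using length
    by (intro exI[of _ "b1 # q @ [b2]"]) (auto simp: path_def path_length_def rel_walk_adjacent_iff)
qed

lemma card_neighbours_le_3:
  assumes "u \<in> V"
  shows "card {v\<in>U. adj u v} \<le> 3"
proof -
  have "card {v\<in>U. adj u v} \<le> card {e\<in>E. u \<in> ends e \<and> ends e - {u} \<subseteq> U}"
    by (rule card_adjacent_le[OF finite_E])
  also have "\<dots> \<le> card {e\<in>E. u \<in> ends e}" using finite_E by (intro card_mono) auto
  also have "\<dots> = 3" using cubic assms by (simp add: cubic_def degree_def)
  finally show ?thesis .
qed

lemma card_port_neighbours_le_2: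
  assumes "e \<in> E" "ends e = {a, b}" "a \<in> U" "b \<notin> U"
  shows "card {v\<in>U. adj a v} \<le> 2"
proof -
  have "card {v\<in>U. adj a v} \<le> card {e'\<in>E. a \<in> ends e' \<and> ends e' - {a} \<subseteq> U}"
    by (rule card_adjacent_le[OF finite_E])
  also have "\<dots> \<le> card ({e'\<in>E. a \<in> ends e'} - {e})" using finite_E assms by (intro card_mono) auto
  also have "\<dots> = 2"
    using cubic assms U_subset_V finite_E by (auto simp: cubic_def degree_def card_Diff_singleton)
  finally show ?thesis .
qed

lemma vertex_far_from_ports:
  assumes "2 ^ Suc k \<le> card U"
  obtains v where "v \<in> U" "v \<notin> rel_ball adj U a1 k" "v \<notin> rel_ball adj U a2 k"
proof -
  have degree: "\<And>u. u \<in> U \<Longrightarrow> card {v\<in>U. adj u v} \<le> 3"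
    using card_neighbours_le_3 U_subset_V by blast
  have "card (rel_ball adj U a1 k) < 2 ^ k"
    using card_rel_ball_less[OF finite_U symp_adjacent e1(2) degree]
      card_port_neighbours_le_2[OF e1_in_E e1] by blast
  moreover have "card (rel_ball adj U a2 k) < 2 ^ k"
    using card_rel_ball_less[OF finite_U symp_adjacent e2(2) degree]
      card_port_neighbours_le_2[OF e2_in_E e2] by blast
  ultimately have "card (rel_ball adj U a1 k \<union> rel_ball adj U a2 k) < card U"
    using card_Un_le[of "rel_ball adj U a1 k" "rel_ball adj U a2 k"] assms by simp
  then have "\<not> U \<subseteq> rel_ball adj U a1 k \<union> rel_ball adj U a2 k"
    using card_mono finite_rel_ball[OF finite_U] by (metis finite_Un not_le)
  then show ?thesis using that by blast
qed

end

lemma double_log_bound_le: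
  fixes n m :: nat
  assumes "2 \<le> n" "n < 2 ^ Suc m"
  shows "2 * log 2 n - 2 * log 2 (log 2 n) - 8 \<le> 2 * m"
proof -
  have "log 2 n < Suc m" by (intro log2_of_power_less) (use assms in auto)
  moreover have "1 \<le> log 2 n" using le_log2_of_power[of 1 n] assms by simp
  then have "0 \<le> log 2 (log 2 n)" by simp
  ultimately show ?thesis by linarith
qed

theorem lemma15:
  fixes V :: "'v set" and E :: "'e set" and ends :: "'e \<Rightarrow> 'v set"
    and U :: "'v set" and e1 e2 :: 'e and a1 a2 b1 b2 :: 'v
  assumes "multigraph V E ends"
    and "cubic V E ends"
    and "two_connected V E ends"
    and "tombolo_cut V E ends U"
    and "U \<noteq> V"
    and "cut_set E ends U = {e1, e2}"
    and "ends e1 = {a1, b1}" and "a1 \<in> U" and "b1 \<notin> U"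
    and "ends e2 = {a2, b2}" and "a2 \<in> U" and "b2 \<notin> U"
  shows "\<exists>p. path E ends p \<and> hd p = b1 \<and> last p = b2 \<and>
             set (butlast (tl p)) \<subseteq> U \<and>
             real (path_length p) \<ge>
               2 * log 2 (card U) - 2 * log 2 (log 2 (card U)) - 8"
proof -
  interpret peninsula V E ends U e1 e2 a1 a2 b1 b2
    using assms by unfold_locales
  obtain m where m: "2 ^ m \<le> card U" "card U < 2 ^ Suc m"
    using ex_power_ivl1[of 2 "card U"] two_le_card_U by auto
  then obtain k where k: "m = Suc k" using two_le_card_U by (cases m) auto
  obtain v where "v \<in> U" "v \<notin> rel_ball adj U a1 k" "v \<notin> rel_ball adj U a2 k"
    using vertex_far_from_ports m(1) k by blast
  then obtain p where p: "path E ends p" "hd p = b1" "last p = b2" "set (butlast (tl p)) \<subseteq> U"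
      "2 * k + 2 \<le> path_length p"
    using long_port_path by blast
  have "2 * log 2 (card U) - 2 * log 2 (log 2 (card U)) - 8 \<le> 2 * m"
    using double_log_bound_le two_le_card_U m(2) by blast
  then show ?thesis using p k by (intro exI[of _ p]) auto
qed

end
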